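(* Let $X,Y$ be real Hilbert spaces, let $A\in\mathcal{L}(X,Y)$ be a compact operator with singular system $\{(\sigma_i,u_i,v_i)\}_i$, and let $\alpha>0$. For $B\in\mathcal{L}(X,Y)$ and $y\in Y$ let $$x(B,y)=\operatorname*{argmin}_{x\in X}\tfrac12\|Bx-y\|^2+\tfrac{\alpha}{2}\|x\|^2=(B^*B+\alpha I)^{-1}B^*y,$$ and let $F(B)=\tfrac12\|A\,x(B,y^\delta)-y^\delta\|^2$. Consider the class $\mathcal{B}$ of operators of the form $B=\sum_i \beta_i\, v_i u_i^*$ with $\beta_i\ge 0$ and $\sup_i\beta_i<\infty$. Then for every $y^\delta\in Y$ the operator $B_\alpha=\sum_i\beta_i^\alpha v_iu_i^*$ with $$\beta_i^\alpha=\begin{cases}\frac{\sigma_i}{2}+\sqrt{\frac{\sigma_i^2}{4}-\alpha}, & \sigma_i\ge 2\sqrt{\alpha},\\[2pt] \sqrt{\alpha}, & \sigma_i<2\sqrt{\alpha},\end{cases}$$ belongs to $\mathcal{B}$ and is a global minimizer of $F$ over $\mathcal{B}$.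
   Context: A singular system of the compact operator $A$ means: $\sigma_i>0$, $\{u_i\}$ orthonormal in $X$, $\{v_i\}$ orthonormal in $Y$, $Au_i=\sigma_i v_i$, $A^*v_i=\sigma_i u_i$, and $A=\sum_i\sigma_i v_iu_i^*$. For $v\in Y$, $u\in X$, $v u^*\in\mathcal{L}(X,Y)$ denotes the rank-one map $x\mapsto\langle u,x\rangle_X\, v$. $I$ is the identity on $X$. *)

theory Defs
  imports "HOL-Analysis.Analysis"
begin

definition compact_operator :: "('a::real_normed_vector \<Rightarrow>\<^sub>L 'b::real_normed_vector) \<Rightarrow> bool" where
  "compact_operator A \<longleftrightarrow> compact (closure (blinfun_apply A ` cball 0 1))"

text \<open>T = sum_i c_i v_i u_i^*, i.e. T x = sum_i c_i <u_i,x> v_i for all x (unconditional sum over I).\<close>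
definition op_series :: "'i set \<Rightarrow> ('i \<Rightarrow> real) \<Rightarrow> ('i \<Rightarrow> 'a::real_inner) \<Rightarrow> ('i \<Rightarrow> 'b::real_inner)
    \<Rightarrow> ('a \<Rightarrow> 'b) \<Rightarrow> bool" where
  "op_series I c u v T \<longleftrightarrow> (\<forall>x. ((\<lambda>i. (c i * inner (u i) x) *\<^sub>R v i) has_sum T x) I)"

definition orthonormal_on :: "'i set \<Rightarrow> ('i \<Rightarrow> 'a::real_inner) \<Rightarrow> bool" where
  "orthonormal_on I u \<longleftrightarrow> (\<forall>i\<in>I. \<forall>j\<in>I. inner (u i) (u j) = (if i = j then 1 else 0))"

text \<open>Singular system (sigma_i, u_i, v_i), i in I, of A. The adjoint relation A^* v_i = sigma_i u_i
  is written out via the defining property of the adjoint: <A x, v_i> = <x, sigma_i u_i> for all x.\<close>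
definition singular_system :: "('a::real_inner \<Rightarrow>\<^sub>L 'b::real_inner) \<Rightarrow> 'i set \<Rightarrow> ('i \<Rightarrow> real)
    \<Rightarrow> ('i \<Rightarrow> 'a) \<Rightarrow> ('i \<Rightarrow> 'b) \<Rightarrow> bool" where
  "singular_system A I \<sigma> u v \<longleftrightarrow>
     (\<forall>i\<in>I. \<sigma> i > 0) \<and> orthonormal_on I u \<and> orthonormal_on I v \<and>
     (\<forall>i\<in>I. blinfun_apply A (u i) = \<sigma> i *\<^sub>R v i) \<and>
     (\<forall>i\<in>I. \<forall>x. inner (blinfun_apply A x) (v i) = inner x (\<sigma> i *\<^sub>R u i)) \<and>
     op_series I \<sigma> u v (blinfun_apply A)"

definition tik_sol :: "real \<Rightarrow> ('a::real_inner \<Rightarrow>\<^sub>L 'b::real_inner) \<Rightarrow> 'b \<Rightarrow> 'a" where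
  "tik_sol \<alpha> B y = (THE x. \<forall>z.
      (1/2) * (norm (blinfun_apply B x - y))\<^sup>2 + (\<alpha>/2) * (norm x)\<^sup>2
      \<le> (1/2) * (norm (blinfun_apply B z - y))\<^sup>2 + (\<alpha>/2) * (norm z)\<^sup>2)"

definition F_obj :: "real \<Rightarrow> ('a::real_inner \<Rightarrow>\<^sub>L 'b::real_inner) \<Rightarrow> 'b
    \<Rightarrow> ('a \<Rightarrow>\<^sub>L 'b) \<Rightarrow> real" where
  "F_obj \<alpha> A y\<delta> B = (1/2) * (norm (blinfun_apply A (tik_sol \<alpha> B y\<delta>) - y\<delta>))\<^sup>2"

definition class_B :: "'i set \<Rightarrow> ('i \<Rightarrow> 'a::real_inner) \<Rightarrow> ('i \<Rightarrow> 'b::real_inner)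
    \<Rightarrow> ('a \<Rightarrow>\<^sub>L 'b) set" where
  "class_B I u v = {B. \<exists>\<beta>. (\<forall>i\<in>I. 0 \<le> \<beta> i) \<and> bdd_above (\<beta> ` I) \<and>
                          op_series I \<beta> u v (blinfun_apply B)}"

definition beta_alpha :: "real \<Rightarrow> real \<Rightarrow> real" where
  "beta_alpha \<alpha> s = (if s \<ge> 2 * sqrt \<alpha> then s / 2 + sqrt (s\<^sup>2 / 4 - \<alpha>) else sqrt \<alpha>)"

end

theory Submission
  imports Defs
begin

text \<open>Everything is diagonal in the singular bases. For \<open>B = \<Sum>\<^sub>i \<beta>\<^sub>i v\<^sub>i u\<^sub>i\<^sup>*\<close> the normal
  equation gives \<open>x(B, y) = \<Sum>\<^sub>i \<beta>\<^sub>i/(\<beta>\<^sub>i\<^sup>2 + \<alpha>) \<langle>v\<^sub>i, y\<rangle> u\<^sub>i\<close>, hence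
  \<open>A x(B, y) = \<Sum>\<^sub>i g\<^sub>i \<langle>v\<^sub>i, y\<rangle> v\<^sub>i\<close> with \<open>g\<^sub>i = \<sigma>\<^sub>i \<beta>\<^sub>i/(\<beta>\<^sub>i\<^sup>2 + \<alpha>)\<close>, and by Parseval
  \<open>2 F(B) - \<parallel>y\<parallel>\<^sup>2 = \<Sum>\<^sub>i ((1 - g\<^sub>i)\<^sup>2 - 1) \<langle>v\<^sub>i, y\<rangle>\<^sup>2\<close>. So \<open>F\<close> is minimised by making each
  \<open>(1 - g\<^sub>i)\<^sup>2\<close> as small as possible, independently of \<open>y\<close>. By AM-GM every choice of \<open>\<beta>\<^sub>i\<close>
  gives \<open>g\<^sub>i \<le> \<sigma>\<^sub>i/(2\<surd>\<alpha>)\<close>, while \<open>\<beta>\<^sub>i\<^sup>\<alpha>\<close> attains \<open>g\<^sub>i = min 1 (\<sigma>\<^sub>i/(2\<surd>\<alpha>))\<close>.\<close>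

lemma power2_norm_add:
  "(norm (a + b))\<^sup>2 = (norm a)\<^sup>2 + 2 * inner a b + (norm (b::'a::real_inner))\<^sup>2"
  by (simp add: power2_norm_eq_inner inner_add_left inner_add_right inner_commute)

lemma orthonormal_on_subset:
  "orthonormal_on I e \<Longrightarrow> J \<subseteq> I \<Longrightarrow> orthonormal_on J e"
  unfolding orthonormal_on_def by blast

lemma orthonormal_on_norm:
  "orthonormal_on I e \<Longrightarrow> i \<in> I \<Longrightarrow> norm (e i) = 1"
  by (simp add: orthonormal_on_def norm_eq_sqrt_inner)

lemma orthonormal_on_inner_has_sum:
  assumes "orthonormal_on I e" "((\<lambda>i. c i *\<^sub>R e i) has_sum s) I" "j \<in> I"
  shows "inner (e j) s = c j"
proof -
  have "((\<lambda>i. inner (e j) (c i *\<^sub>R e i)) has_sum inner (e j) s) I"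
    by (rule has_sum_bounded_linear[OF bounded_linear_inner_right assms(2)])
  moreover have "((\<lambda>i. inner (e j) (c i *\<^sub>R e i)) has_sum c j) I \<longleftrightarrow> ((\<lambda>_. c j) has_sum c j) {j}"
    using assms(1,3) by (intro has_sum_cong_neutral) (auto simp: orthonormal_on_def)
  ultimately show ?thesis
    using has_sum_finite[of "{j}" "\<lambda>_. c j"] has_sum_unique by fastforce
qed

lemma orthonormal_on_norm_has_sum:
  assumes "orthonormal_on I e" "((\<lambda>i. c i *\<^sub>R e i) has_sum s) I"
  shows "((\<lambda>i. (c i)\<^sup>2) has_sum (norm s)\<^sup>2) I"
proof -
  have "((\<lambda>i. c i * inner (e i) s) has_sum inner s s) I"
    using has_sum_bounded_linear[OF bounded_linear_inner_left assms(2), of s] by simp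
  moreover have "c i * inner (e i) s = (c i)\<^sup>2" if "i \<in> I" for i
    using orthonormal_on_inner_has_sum[OF assms that] by (simp add: power2_eq_square)
  ultimately have "((\<lambda>i. (c i)\<^sup>2) has_sum inner s s) I"
    by (simp cong: has_sum_cong)
  then show ?thesis
    by (simp add: power2_norm_eq_inner)
qed

lemma orthonormal_on_norm_sum:
  assumes "orthonormal_on I e" "finite G" "G \<subseteq> I"
  shows "(norm (\<Sum>i\<in>G. c i *\<^sub>R e i))\<^sup>2 = (\<Sum>i\<in>G. (c i)\<^sup>2)"
  using orthonormal_on_norm_has_sum[OF orthonormal_on_subset[OF assms(1,3)] has_sum_finite[OF assms(2)]]
    has_sum_finite[OF assms(2)] has_sum_unique by blast

lemma orthonormal_on_residual_has_sum:
  assumes "orthonormal_on I v" "((\<lambda>i. (d i * inner (v i) y) *\<^sub>R v i) has_sum z) I"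
  shows "((\<lambda>i. ((1 - d i)\<^sup>2 - 1) * (inner (v i) y)\<^sup>2) has_sum (norm (z - y))\<^sup>2 - (norm y)\<^sup>2) I"
proof -
  have "((\<lambda>i. (d i * inner (v i) y)\<^sup>2 + -2 * (d i * inner (v i) y * inner (v i) y))
      has_sum (norm z)\<^sup>2 + -2 * inner z y) I"
    using orthonormal_on_norm_has_sum[OF assms] has_sum_bounded_linear[OF bounded_linear_inner_left assms(2), of y]
    by (intro has_sum_add has_sum_cmult_right) auto
  moreover have "(norm (z - y))\<^sup>2 - (norm y)\<^sup>2 = (norm z)\<^sup>2 + -2 * inner z y"
    using power2_norm_add[of z "-y"] by simp
  moreover have "(d i * w)\<^sup>2 + -2 * (d i * w * w) = ((1 - d i)\<^sup>2 - 1) * w\<^sup>2" for i and w :: real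
    by (simp add: power2_eq_square algebra_simps)
  ultimately show ?thesis
    by simp
qed

lemma bessel_inequality_finite:
  assumes "orthonormal_on I e" "finite G" "G \<subseteq> I"
  shows "(\<Sum>i\<in>G. (inner (e i) x)\<^sup>2) \<le> (norm x)\<^sup>2"
proof -
  let ?p = "\<Sum>i\<in>G. inner (e i) x *\<^sub>R e i"
  have "inner ?p x = (norm ?p)\<^sup>2"
    using orthonormal_on_norm_sum[OF assms] by (simp add: inner_sum_left power2_eq_square)
  then have "(norm (x - ?p))\<^sup>2 = (norm x)\<^sup>2 - (norm ?p)\<^sup>2"
    by (simp add: power2_norm_eq_inner inner_diff_left inner_diff_right inner_commute)
  then show ?thesis
    using orthonormal_on_norm_sum[OF assms] by (metis diff_ge_0_iff_ge zero_le_power2)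
qed

lemma bessel_inequality:
  assumes "orthonormal_on I e"
  shows "(\<lambda>i. (inner (e i) x)\<^sup>2) summable_on I"
    and "(\<Sum>\<^sub>\<infinity>i\<in>I. (inner (e i) x)\<^sup>2) \<le> (norm x)\<^sup>2"
proof -
  show summable: "(\<lambda>i. (inner (e i) x)\<^sup>2) summable_on I"
    using bessel_inequality_finite[OF assms]
    by (intro nonneg_bdd_above_summable_on bdd_aboveI[where M="(norm x)\<^sup>2"]) auto
  show "(\<Sum>\<^sub>\<infinity>i\<in>I. (inner (e i) x)\<^sup>2) \<le> (norm x)\<^sup>2"
    using infsum_le_finite_sums[OF summable bessel_inequality_finite[OF assms]] by blast
qed

lemma power2_mult_le_of_abs_le:
  fixes k a M :: real
  assumes "\<bar>k\<bar> \<le> M"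
  shows "(k * a)\<^sup>2 \<le> M\<^sup>2 * a\<^sup>2"
proof -
  have "k\<^sup>2 \<le> M\<^sup>2"
    using power_mono[OF assms abs_ge_zero, of 2] by simp
  then show ?thesis
    by (simp add: power_mult_distrib mult_right_mono)
qed

lemma bessel_square_summable_mult:
  assumes "orthonormal_on I e" "\<And>i. i \<in> I \<Longrightarrow> \<bar>k i\<bar> \<le> M"
  shows "(\<lambda>i. (k i * inner (e i) x)\<^sup>2) summable_on I"
  using summable_on_cmult_right[OF bessel_inequality(1)[OF assms(1), of x], of "M\<^sup>2"]
  by (rule summable_on_comparison_test) (simp_all add: assms(2) power2_mult_le_of_abs_le)

lemma summable_on_if_small_tails:
  fixes f :: "'i \<Rightarrow> 'a::{real_normed_vector,complete_space}"
  assumes "\<And>\<epsilon>. \<epsilon> > 0 \<Longrightarrow> \<exists>F0. finite F0 \<and> F0 \<subseteq> I \<and> (\<forall>G. finite G \<and> G \<subseteq> I - F0 \<longrightarrow> norm (sum f G) < \<epsilon>)"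
  shows "f summable_on I"
proof -
  have "\<exists>P. eventually P (finite_subsets_at_top I) \<and>
            (\<forall>F F'. P F \<and> P F' \<longrightarrow> dist (sum f F) (sum f F') < \<epsilon>)" if "\<epsilon> > 0" for \<epsilon>
  proof -
    obtain F0 where F0: "finite F0" "F0 \<subseteq> I"
      and small: "\<And>G. finite G \<Longrightarrow> G \<subseteq> I - F0 \<Longrightarrow> norm (sum f G) < \<epsilon>/2"
      using assms[of "\<epsilon>/2"] \<open>\<epsilon> > 0\<close> by auto
    define P where "P F \<longleftrightarrow> finite F \<and> F0 \<subseteq> F \<and> F \<subseteq> I" for F
    have "eventually P (finite_subsets_at_top I)"
      unfolding P_def eventually_finite_subsets_at_top using F0 by blast
    moreover have "dist (sum f F) (sum f F') < \<epsilon>" if "P F" "P F'" for F F'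
    proof -
      have "sum f F = sum f (F - F0) + sum f F0" "sum f F' = sum f (F' - F0) + sum f F0"
        using that unfolding P_def by (simp_all add: sum.subset_diff)
      then have "dist (sum f F) (sum f F') = norm (sum f (F - F0) - sum f (F' - F0))"
        by (simp add: dist_norm)
      also have "\<dots> \<le> norm (sum f (F - F0)) + norm (sum f (F' - F0))"
        by (rule norm_triangle_ineq4)
      also have "\<dots> < \<epsilon>/2 + \<epsilon>/2"
        using that unfolding P_def by (intro add_strict_mono small) auto
      finally show ?thesis by simp
    qed
    ultimately show ?thesis by blast
  qed
  then have "cauchy_filter (filtermap (sum f) (finite_subsets_at_top I))"
    by (simp add: cauchy_filter_metric_filtermap)
  moreover have "filtermap (sum f) (finite_subsets_at_top I) \<noteq> bot"
    by (simp add: filtermap_bot_iff)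
  ultimately obtain s where "filtermap (sum f) (finite_subsets_at_top I) \<le> nhds s"
    using cauchy_filter_complete_converges[OF _ complete_UNIV] by auto
  then show ?thesis
    by (auto simp: summable_on_def has_sum_def filterlim_def)
qed

lemma orthonormal_on_summable:
  fixes e :: "'i \<Rightarrow> 'a::{real_inner,complete_space}"
  assumes "orthonormal_on I e" "(\<lambda>i. (c i)\<^sup>2) summable_on I"
  shows "(\<lambda>i. c i *\<^sub>R e i) summable_on I"
proof (rule summable_on_if_small_tails)
  fix \<epsilon> :: real assume "\<epsilon> > 0"
  let ?L = "\<Sum>\<^sub>\<infinity>i\<in>I. (c i)\<^sup>2"
  obtain F0 where F0: "finite F0" "F0 \<subseteq> I" and close: "dist (\<Sum>i\<in>F0. (c i)\<^sup>2) ?L \<le> \<epsilon>\<^sup>2/2"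
    using infsum_finite_approximation[OF assms(2), of "\<epsilon>\<^sup>2/2"] \<open>\<epsilon> > 0\<close> by auto
  have "norm (\<Sum>i\<in>G. c i *\<^sub>R e i) < \<epsilon>" if G: "finite G" "G \<subseteq> I - F0" for G
  proof -
    have "(norm (\<Sum>i\<in>G. c i *\<^sub>R e i))\<^sup>2 = (\<Sum>i\<in>G. (c i)\<^sup>2)"
      using orthonormal_on_norm_sum[OF assms(1)] G by blast
    also have "\<dots> = (\<Sum>i\<in>F0 \<union> G. (c i)\<^sup>2) - (\<Sum>i\<in>F0. (c i)\<^sup>2)"
      using G F0 by (subst sum.union_disjoint) auto
    also have "\<dots> \<le> ?L - (\<Sum>i\<in>F0. (c i)\<^sup>2)"
      using G F0 by (intro diff_right_mono finite_sum_le_has_sum[OF has_sum_infsum[OF assms(2)]]) auto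
    also have "\<dots> < \<epsilon>\<^sup>2"
      using close \<open>\<epsilon> > 0\<close> zero_less_power[of \<epsilon> 2] unfolding dist_real_def by linarith
    finally show ?thesis
      using \<open>\<epsilon> > 0\<close> by (simp add: power_less_imp_less_base)
  qed
  then show "\<exists>F0. finite F0 \<and> F0 \<subseteq> I \<and> (\<forall>G. finite G \<and> G \<subseteq> I - F0 \<longrightarrow> norm (\<Sum>i\<in>G. c i *\<^sub>R e i) < \<epsilon>)"
    using F0 by blast
qed

lemma op_series_inner:
  assumes "orthonormal_on I v" "op_series I \<beta> u v T" "i \<in> I"
  shows "inner (v i) (T x) = \<beta> i * inner (u i) x"
  by (rule orthonormal_on_inner_has_sum[OF assms(1) _ assms(3)])
    (use assms(2) in \<open>simp add: op_series_def\<close>)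

lemma op_series_norm_le:
  assumes ou: "orthonormal_on I u" and ov: "orthonormal_on I v"
    and bound: "\<And>i. i \<in> I \<Longrightarrow> \<bar>\<beta> i\<bar> \<le> M"
    and sum: "((\<lambda>i. (\<beta> i * inner (u i) x) *\<^sub>R v i) has_sum y) I"
  shows "norm y \<le> norm x * \<bar>M\<bar>"
proof -
  have "(norm y)\<^sup>2 \<le> M\<^sup>2 * (\<Sum>\<^sub>\<infinity>i\<in>I. (inner (u i) x)\<^sup>2)"
  proof (rule has_sum_mono[OF orthonormal_on_norm_has_sum[OF ov sum] has_sum_cmult_right])
    show "((\<lambda>i. (inner (u i) x)\<^sup>2) has_sum (\<Sum>\<^sub>\<infinity>i\<in>I. (inner (u i) x)\<^sup>2)) I"
      using bessel_inequality(1)[OF ou] by (simp add: summable_iff_has_sum_infsum)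
  qed (simp add: bound power2_mult_le_of_abs_le)
  also have "\<dots> \<le> (norm x * \<bar>M\<bar>)\<^sup>2"
    using mult_left_mono[OF bessel_inequality(2)[OF ou], of "M\<^sup>2" x]
    by (simp add: power_mult_distrib mult.commute)
  finally show ?thesis
    by (rule power2_le_imp_le) simp
qed

lemma op_series_exists:
  fixes u :: "'i \<Rightarrow> 'a::real_inner" and v :: "'i \<Rightarrow> 'b::{real_inner,complete_space}"
  assumes ou: "orthonormal_on I u" and ov: "orthonormal_on I v"
    and bound: "\<And>i. i \<in> I \<Longrightarrow> \<bar>\<beta> i\<bar> \<le> M"
  shows "\<exists>T::'a \<Rightarrow>\<^sub>L 'b. op_series I \<beta> u v (blinfun_apply T)"
proof -
  define T where "T x = (\<Sum>\<^sub>\<infinity>i\<in>I. (\<beta> i * inner (u i) x) *\<^sub>R v i)" for x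
  have T: "((\<lambda>i. (\<beta> i * inner (u i) x) *\<^sub>R v i) has_sum T x) I" for x
    unfolding T_def summable_iff_has_sum_infsum[symmetric]
    by (rule orthonormal_on_summable[OF ov bessel_square_summable_mult[OF ou bound]])
  have add: "T (x + x') = T x + T x'" for x x'
    using has_sum_add[OF T[of x] T[of x']] T[of "x + x'"] has_sum_unique
    by (fastforce simp: inner_add_right distrib_left scaleR_add_left)
  have scale: "T (r *\<^sub>R x) = r *\<^sub>R T x" for r x
    using has_sum_scaleR[OF T[of x], of r] T[of "r *\<^sub>R x"] has_sum_unique
    by (fastforce simp: mult.left_commute)
  have "bounded_linear T"
    using op_series_norm_le[OF ou ov bound T] by (intro bounded_linear_intro[OF add scale])
  then have "op_series I \<beta> u v (blinfun_apply (Blinfun T))"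
    using T by (simp add: op_series_def bounded_linear_Blinfun_apply)
  then show ?thesis ..
qed

lemma singular_system_le_norm:
  assumes "singular_system A I \<sigma> u v" "i \<in> I"
  shows "\<sigma> i \<le> norm A"
proof -
  have "\<sigma> i = norm (A (u i))"
    using assms orthonormal_on_norm[of I v] by (auto simp: singular_system_def)
  also have "\<dots> \<le> norm A * norm (u i)"
    by (rule norm_blinfun)
  also have "\<dots> = norm A"
    using assms orthonormal_on_norm[of I u] by (simp add: singular_system_def)
  finally show ?thesis .
qed

text \<open>The hypothesis is the normal equation \<open>(B\<^sup>* B + \<alpha> I) x = B\<^sup>* y\<close> in weak form.\<close>
lemma tik_sol_eqI:
  fixes B :: "'a::real_inner \<Rightarrow>\<^sub>L 'b::real_inner"
  assumes "\<alpha> > 0" and normal_equation: "\<And>h. inner (B x - y) (B h) + \<alpha> * inner x h = 0"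
  shows "tik_sol \<alpha> B y = x"
proof -
  define J where "J z = (1/2) * (norm (B z - y))\<^sup>2 + (\<alpha>/2) * (norm z)\<^sup>2" for z
  have expand: "J z = J x + (1/2) * (norm (B (z - x)))\<^sup>2 + (\<alpha>/2) * (norm (z - x))\<^sup>2" for z
  proof -
    have "B z - y = (B x - y) + B (z - x)"
      by (simp add: blinfun.diff_right)
    then have residual: "(norm (B z - y))\<^sup>2
        = (norm (B x - y))\<^sup>2 + 2 * inner (B x - y) (B (z - x)) + (norm (B (z - x)))\<^sup>2"
      by (simp only: power2_norm_add)
    have norm: "(norm z)\<^sup>2 = (norm x)\<^sup>2 + 2 * inner x (z - x) + (norm (z - x))\<^sup>2"
      using power2_norm_add[of x "z - x"] by simp
    have "J z = J x + (1/2) * (norm (B (z - x)))\<^sup>2 + (\<alpha>/2) * (norm (z - x))\<^sup>2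
                + (inner (B x - y) (B (z - x)) + \<alpha> * inner x (z - x))"
      unfolding J_def residual norm by (simp add: algebra_simps)
    then show ?thesis
      using normal_equation[of "z - x"] by simp
  qed
  have "J x \<le> J z" for z
    using expand[of z] \<open>\<alpha> > 0\<close> by simp
  moreover have "x' = x" if "\<forall>z. J x' \<le> J z" for x'
  proof -
    have "(\<alpha>/2) * (norm (x' - x))\<^sup>2 \<le> 0"
      using that[rule_format, of x] expand[of x'] zero_le_power2[of "norm (B (x' - x))"] by linarith
    then show ?thesis
      using \<open>\<alpha> > 0\<close> by (simp add: mult_le_0_iff)
  qed
  ultimately show ?thesis
    unfolding tik_sol_def J_def[symmetric] by (intro the_equality) auto
qed

lemma abs_div_square_add_le:
  fixes b :: real
  assumes "\<alpha> > 0"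
  shows "\<bar>b / (b\<^sup>2 + \<alpha>)\<bar> \<le> 1 / (2 * sqrt \<alpha>)"
proof -
  have "0 \<le> (\<bar>b\<bar> - sqrt \<alpha>)\<^sup>2"
    by simp
  then have "\<bar>b\<bar> * (2 * sqrt \<alpha>) \<le> b\<^sup>2 + \<alpha>"
    using \<open>\<alpha> > 0\<close> by (simp add: power2_diff mult_ac)
  moreover have "b\<^sup>2 + \<alpha> > 0" "sqrt \<alpha> > 0"
    using \<open>\<alpha> > 0\<close> by (simp_all add: add_nonneg_pos)
  ultimately show ?thesis
    by (simp add: abs_divide divide_simps)
qed

lemma tik_sol_op_series:
  fixes u :: "'i \<Rightarrow> 'a::{real_inner,complete_space}" and v :: "'i \<Rightarrow> 'b::real_inner"
    and B :: "'a \<Rightarrow>\<^sub>L 'b"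
  assumes ou: "orthonormal_on I u" and ov: "orthonormal_on I v" and "\<alpha> > 0"
    and opB: "op_series I \<beta> u v (blinfun_apply B)"
  shows "((\<lambda>i. (\<beta> i / ((\<beta> i)\<^sup>2 + \<alpha>) * inner (v i) y) *\<^sub>R u i) has_sum tik_sol \<alpha> B y) I"
proof -
  define c where "c i = \<beta> i / ((\<beta> i)\<^sup>2 + \<alpha>) * inner (v i) y" for i
  have "(\<lambda>i. c i *\<^sub>R u i) summable_on I"
    unfolding c_def using abs_div_square_add_le[OF \<open>\<alpha> > 0\<close>]
    by (intro orthonormal_on_summable[OF ou bessel_square_summable_mult[OF ov]])
  then obtain x where x: "((\<lambda>i. c i *\<^sub>R u i) has_sum x) I"
    unfolding summable_on_def by blast
  have "inner (B x - y) (B h) + \<alpha> * inner x h = 0" for h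
  proof -
    have "((\<lambda>i. inner (B x - y) ((\<beta> i * inner (u i) h) *\<^sub>R v i) + \<alpha> * inner (c i *\<^sub>R u i) h)
        has_sum (inner (B x - y) (B h) + \<alpha> * inner x h)) I"
      using opB unfolding op_series_def
      by (intro has_sum_add has_sum_cmult_right has_sum_bounded_linear[OF bounded_linear_inner_right]
          has_sum_bounded_linear[OF bounded_linear_inner_left x]) blast
    moreover have "inner (B x - y) ((\<beta> i * inner (u i) h) *\<^sub>R v i) + \<alpha> * inner (c i *\<^sub>R u i) h = 0"
      if "i \<in> I" for i
    proof -
      have "inner (v i) (B x) = \<beta> i * c i"
        using op_series_inner[OF ov opB that] orthonormal_on_inner_has_sum[OF ou x that] by simp
      then have "inner (B x - y) ((\<beta> i * inner (u i) h) *\<^sub>R v i) + \<alpha> * inner (c i *\<^sub>R u i) h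
          = inner (u i) h * (c i * ((\<beta> i)\<^sup>2 + \<alpha>) - \<beta> i * inner (v i) y)"
        by (simp add: inner_diff_left inner_commute power2_eq_square algebra_simps)
      moreover have "(\<beta> i)\<^sup>2 + \<alpha> > 0"
        using \<open>\<alpha> > 0\<close> by (simp add: add_nonneg_pos)
      ultimately show ?thesis
        by (simp add: c_def)
    qed
    ultimately show ?thesis
      using has_sum_0 has_sum_cong has_sum_unique by (metis (no_types, lifting))
  qed
  then have "tik_sol \<alpha> B y = x"
    by (rule tik_sol_eqI[OF \<open>\<alpha> > 0\<close>])
  then show ?thesis
    using x by (simp add: c_def)
qed

text \<open>The factor by which \<open>A x(B, y)\<close> scales the component of \<open>y\<close> along \<open>v\<^sub>i\<close>,
  for singular value \<open>s = \<sigma>\<^sub>i\<close> of \<open>A\<close> and coefficient \<open>b = \<beta>\<^sub>i\<close> of \<open>B\<close>.\<close>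
definition tikhonov_filter :: "real \<Rightarrow> real \<Rightarrow> real \<Rightarrow> real" where
  "tikhonov_filter \<alpha> s b = s * b / (b\<^sup>2 + \<alpha>)"

lemma tikhonov_filter_le:
  assumes "\<alpha> > 0" "s \<ge> 0"
  shows "tikhonov_filter \<alpha> s b \<le> s / (2 * sqrt \<alpha>)"
proof -
  have "tikhonov_filter \<alpha> s b = s * (b / (b\<^sup>2 + \<alpha>))"
    by (simp add: tikhonov_filter_def)
  also have "\<dots> \<le> s * \<bar>b / (b\<^sup>2 + \<alpha>)\<bar>"
    by (rule mult_left_mono[OF abs_ge_self \<open>s \<ge> 0\<close>])
  also have "\<dots> \<le> s / (2 * sqrt \<alpha>)"
    using mult_left_mono[OF abs_div_square_add_le[OF \<open>\<alpha> > 0\<close>] \<open>s \<ge> 0\<close>] by simp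
  finally show ?thesis .
qed

lemma op_series_tik_sol:
  fixes u :: "'i \<Rightarrow> 'a::{real_inner,complete_space}" and v :: "'i \<Rightarrow> 'b::real_inner"
    and B :: "'a \<Rightarrow>\<^sub>L 'b"
  assumes ou: "orthonormal_on I u" and ov: "orthonormal_on I v" and "\<alpha> > 0"
    and opB: "op_series I \<beta> u v (blinfun_apply B)" and opT: "op_series I \<sigma> u v T"
  shows "((\<lambda>i. (tikhonov_filter \<alpha> (\<sigma> i) (\<beta> i) * inner (v i) y) *\<^sub>R v i) has_sum T (tik_sol \<alpha> B y)) I"
proof -
  have "((\<lambda>i. (\<sigma> i * inner (u i) (tik_sol \<alpha> B y)) *\<^sub>R v i) has_sum T (tik_sol \<alpha> B y)) I"
    using opT by (simp add: op_series_def)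
  moreover have "inner (u i) (tik_sol \<alpha> B y) = \<beta> i / ((\<beta> i)\<^sup>2 + \<alpha>) * inner (v i) y" if "i \<in> I" for i
    by (rule orthonormal_on_inner_has_sum[OF ou tik_sol_op_series[OF ou ov \<open>\<alpha> > 0\<close> opB] that])
  ultimately show ?thesis
    by (simp add: tikhonov_filter_def mult.assoc cong: has_sum_cong)
qed

lemma F_obj_op_series_has_sum:
  fixes u :: "'i \<Rightarrow> 'a::{real_inner,complete_space}" and v :: "'i \<Rightarrow> 'b::real_inner"
    and A B :: "'a \<Rightarrow>\<^sub>L 'b"
  assumes ou: "orthonormal_on I u" and ov: "orthonormal_on I v" and "\<alpha> > 0"
    and opA: "op_series I \<sigma> u v (blinfun_apply A)" and opB: "op_series I \<beta> u v (blinfun_apply B)"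
  shows "((\<lambda>i. ((1 - tikhonov_filter \<alpha> (\<sigma> i) (\<beta> i))\<^sup>2 - 1) * (inner (v i) y)\<^sup>2)
          has_sum 2 * F_obj \<alpha> A y B - (norm y)\<^sup>2) I"
  using orthonormal_on_residual_has_sum[OF ov op_series_tik_sol[OF ou ov \<open>\<alpha> > 0\<close> opB opA]]
  by (simp add: F_obj_def)

lemma F_obj_mono:
  fixes u :: "'i \<Rightarrow> 'a::{real_inner,complete_space}" and v :: "'i \<Rightarrow> 'b::real_inner"
    and A B B' :: "'a \<Rightarrow>\<^sub>L 'b"
  assumes ou: "orthonormal_on I u" and ov: "orthonormal_on I v" and "\<alpha> > 0"
    and opA: "op_series I \<sigma> u v (blinfun_apply A)"
    and opB: "op_series I \<beta> u v (blinfun_apply B)" and opB': "op_series I \<beta>' u v (blinfun_apply B')"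
    and closer: "\<And>i. i \<in> I \<Longrightarrow>
      (1 - tikhonov_filter \<alpha> (\<sigma> i) (\<beta> i))\<^sup>2 \<le> (1 - tikhonov_filter \<alpha> (\<sigma> i) (\<beta>' i))\<^sup>2"
  shows "F_obj \<alpha> A y B \<le> F_obj \<alpha> A y B'"
proof -
  have "2 * F_obj \<alpha> A y B - (norm y)\<^sup>2 \<le> 2 * F_obj \<alpha> A y B' - (norm y)\<^sup>2"
    using F_obj_op_series_has_sum[OF ou ov \<open>\<alpha> > 0\<close> opA opB]
      F_obj_op_series_has_sum[OF ou ov \<open>\<alpha> > 0\<close> opA opB']
    by (rule has_sum_mono) (simp add: closer mult_right_mono)
  then show ?thesis
    by simp
qed

lemma beta_alpha_radicand_nonneg:
  assumes "\<alpha> > 0" "s \<ge> 2 * sqrt \<alpha>"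
  shows "0 \<le> s\<^sup>2 / 4 - \<alpha>"
proof -
  have "(2 * sqrt \<alpha>)\<^sup>2 \<le> s\<^sup>2"
    using assms by (intro power_mono) auto
  then show ?thesis
    using assms(1) by (simp add: power_mult_distrib)
qed

lemma beta_alpha_bounds:
  assumes "\<alpha> > 0"
  shows "0 \<le> beta_alpha \<alpha> s" "beta_alpha \<alpha> s \<le> max s (sqrt \<alpha>)"
proof -
  have "0 \<le> beta_alpha \<alpha> s \<and> beta_alpha \<alpha> s \<le> max s (sqrt \<alpha>)"
  proof (cases "s \<ge> 2 * sqrt \<alpha>")
    case True
    then have "0 \<le> s"
      using \<open>\<alpha> > 0\<close> by (auto intro: order_trans[OF _ True])
    have "sqrt (s\<^sup>2 / 4 - \<alpha>) \<le> sqrt ((s / 2)\<^sup>2)"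
      using \<open>\<alpha> > 0\<close> by (intro real_sqrt_le_mono) (simp add: power_divide)
    then show ?thesis
      using True \<open>0 \<le> s\<close> beta_alpha_radicand_nonneg[OF \<open>\<alpha> > 0\<close> True]
      by (simp add: beta_alpha_def)
  next
    case False
    then show ?thesis
      using \<open>\<alpha> > 0\<close> by (simp add: beta_alpha_def)
  qed
  then show "0 \<le> beta_alpha \<alpha> s" "beta_alpha \<alpha> s \<le> max s (sqrt \<alpha>)"
    by auto
qed

lemma tikhonov_filter_beta_alpha:
  assumes "\<alpha> > 0"
  shows "tikhonov_filter \<alpha> s (beta_alpha \<alpha> s) = min 1 (s / (2 * sqrt \<alpha>))"
proof (cases "s \<ge> 2 * sqrt \<alpha>")
  case True
  define r where "r = sqrt (s\<^sup>2 / 4 - \<alpha>)"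
  have "r * r = s * s / 4 - \<alpha>"
    using beta_alpha_radicand_nonneg[OF \<open>\<alpha> > 0\<close> True] by (simp add: r_def flip: power2_eq_square)
  moreover have "beta_alpha \<alpha> s = s / 2 + r"
    using True by (simp add: beta_alpha_def r_def)
  ultimately have "s * beta_alpha \<alpha> s = (beta_alpha \<alpha> s)\<^sup>2 + \<alpha>"
    by (simp add: power2_eq_square algebra_simps)
  moreover have "(beta_alpha \<alpha> s)\<^sup>2 + \<alpha> > 0"
    using \<open>\<alpha> > 0\<close> by (simp add: add_nonneg_pos)
  moreover have "1 \<le> s / (2 * sqrt \<alpha>)"
    using True \<open>\<alpha> > 0\<close> by simp
  ultimately show ?thesis
    by (simp add: tikhonov_filter_def)
next
  case False
  then show ?thesis
    using \<open>\<alpha> > 0\<close> by (simp add: tikhonov_filter_def beta_alpha_def power2_eq_square divide_simps)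
qed

lemma tikhonov_filter_beta_alpha_optimal:
  assumes "\<alpha> > 0" "s \<ge> 0"
  shows "(1 - tikhonov_filter \<alpha> s (beta_alpha \<alpha> s))\<^sup>2 \<le> (1 - tikhonov_filter \<alpha> s b)\<^sup>2"
  using tikhonov_filter_le[OF assms, of b]
  by (auto simp: tikhonov_filter_beta_alpha[OF assms(1)] min_def intro!: power_mono)

theorem theorem1:
  fixes A :: "'a::{real_inner,complete_space} \<Rightarrow>\<^sub>L 'b::{real_inner,complete_space}"
    and I :: "'i set" and \<sigma> :: "'i \<Rightarrow> real" and u :: "'i \<Rightarrow> 'a" and v :: "'i \<Rightarrow> 'b"
    and \<alpha> :: real
  assumes "compact_operator A"
    and "singular_system A I \<sigma> u v"
    and "\<alpha> > 0"
  shows "\<exists>B\<alpha>. op_series I (\<lambda>i. beta_alpha \<alpha> (\<sigma> i)) u v (blinfun_apply B\<alpha>) \<and>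
              B\<alpha> \<in> class_B I u v \<and>
              (\<forall>y\<delta>. \<forall>B\<in>class_B I u v. F_obj \<alpha> A y\<delta> B\<alpha> \<le> F_obj \<alpha> A y\<delta> B)"
proof -
  have ou: "orthonormal_on I u" and ov: "orthonormal_on I v"
    and \<sigma>_pos: "\<And>i. i \<in> I \<Longrightarrow> \<sigma> i > 0" and opA: "op_series I \<sigma> u v (blinfun_apply A)"
    using assms(2) by (auto simp: singular_system_def)
  have bound: "\<bar>beta_alpha \<alpha> (\<sigma> i)\<bar> \<le> max (norm A) (sqrt \<alpha>)" if "i \<in> I" for i
    using beta_alpha_bounds[OF \<open>\<alpha> > 0\<close>, of "\<sigma> i"] singular_system_le_norm[OF assms(2) that] by auto
  then obtain B\<alpha> :: "'a \<Rightarrow>\<^sub>L 'b" where opB\<alpha>: "op_series I (\<lambda>i. beta_alpha \<alpha> (\<sigma> i)) u v (blinfun_apply B\<alpha>)"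
    using op_series_exists[OF ou ov, of "\<lambda>i. beta_alpha \<alpha> (\<sigma> i)"] by blast
  have "B\<alpha> \<in> class_B I u v"
    unfolding class_B_def using opB\<alpha> bound beta_alpha_bounds(1)[OF \<open>\<alpha> > 0\<close>]
    by (intro CollectI exI[of _ "\<lambda>i. beta_alpha \<alpha> (\<sigma> i)"] conjI ballI
        bdd_aboveI[where M = "max (norm A) (sqrt \<alpha>)"]) auto
  moreover have "F_obj \<alpha> A y B\<alpha> \<le> F_obj \<alpha> A y B" if B: "B \<in> class_B I u v" for y B
  proof -
    obtain \<beta> where "op_series I \<beta> u v (blinfun_apply B)"
      using B unfolding class_B_def by blast
    then show ?thesis
      using tikhonov_filter_beta_alpha_optimal[OF \<open>\<alpha> > 0\<close> less_imp_le[OF \<sigma>_pos]]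
      by (intro F_obj_mono[OF ou ov \<open>\<alpha> > 0\<close> opA opB\<alpha>])
  qed
  ultimately show ?thesis
    using opB\<alpha> by blast
qed

end
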